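(* Fix $c>0$, let $\Phi\in\Omega(n,\lfloor c2^n\rfloor)$, and let $p=p(n)$ be integers with $1\le p(n)\le n$ and $\lim_{n\to\infty}\big[n-\log_2 n-p(n)\big]=\infty$. Then the conditional probability that PUR rejects at stage $p(n)$, given that PUR reaches stage $p(n)$, is $1-o(1)$.
   Context: $\mathcal H_n$ is the set of pairs $(P,S)$ with $P\in\{\emptyset,\{1\},\dots,\{n\}\}$, $S\subseteq\{1,\dots,n\}$, $(P,S)\ne(\emptyset,\emptyset)$, representing the Horn clause $\bigvee_{i\in P}x_i\vee\bigvee_{j\in S}\neg x_j$ (so $|\mathcal H_n|\sim n2^n$; the paper writes this number as $(n+2)2^n-1$); $\Omega(n,m)$ is the distribution of the conjunction of $m$ clauses drawn independently, uniformly with repetition from $\mathcal H_n$. Algorithm PUR on a Horn formula $\Phi$: if $\Phi$ has no positive unit clause (single literal $x_i$), accept. Otherwise choose uniformly at random a positive unit clause $x_i$; if $\Phi$ contains the clause $\neg x_i$, reject; otherwise set $x_i=1$ (delete clauses containing $x_i$, delete $\neg x_i$ from the others) and recurse. Stages: stage $t$ is the iteration performed when exactly $t$ variables are unassigned (first iteration = stage $n$). PUR reaches stage $t$ if it neither accepted nor rejected at stages $n,\dots,t+1$; PUR rejects at stage $t$ if it reaches stage $t$ and returns FALSE in that iteration. *)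

theory Defs
  imports "HOL-Probability.Probability"
begin

text \<open>A Horn clause (P,S): P is the set of positive literals (empty or a singleton),
  S the set of negated variables.\<close>
type_synonym clause = "nat set \<times> nat set"

definition horn_clauses :: "nat \<Rightarrow> clause set" where
  "horn_clauses n = {(P, S). (P = {} \<or> (\<exists>i\<in>{1..n}. P = {i})) \<and> S \<subseteq> {1..n} \<and> (P, S) \<noteq> ({}, {})}"

text \<open>Omega(n,m): m clauses drawn independently and uniformly (with repetition) from H_n.\<close>
fun formula_pmf :: "nat \<Rightarrow> nat \<Rightarrow> clause list pmf" where
  "formula_pmf n 0 = return_pmf []"
| "formula_pmf n (Suc m) =
     pmf_of_set (horn_clauses n) \<bind> (\<lambda>c. map_pmf (\<lambda>cs. c # cs) (formula_pmf n m))"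

definition pos_units :: "clause list \<Rightarrow> nat set" where
  "pos_units \<Phi> = {i. ({i}, {}) \<in> set \<Phi>}"

definition assign_true :: "nat \<Rightarrow> clause list \<Rightarrow> clause list" where
  "assign_true i \<Phi> = map (\<lambda>(P, S). (P, S - {i})) (filter (\<lambda>(P, S). i \<notin> P) \<Phi>)"

lemma finite_pos_units: "finite (pos_units \<Phi>)"
proof -
  have "pos_units \<Phi> \<subseteq> (\<lambda>c. the_elem (fst c)) ` set \<Phi>"
    unfolding pos_units_def by (force)
  thus ?thesis by (rule finite_subset) simp
qed

lemma card_assign_true_less:
  assumes "i \<in> pos_units \<Phi>"
  shows "card (set (assign_true i \<Phi>)) < card (set \<Phi>)"
proof -
  let ?f = "\<lambda>(P::nat set, S). (P, S - {i})"
  let ?A = "set (filter (\<lambda>(P, S). i \<notin> P) \<Phi>)"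
  have eq: "set (assign_true i \<Phi>) = ?f ` ?A" unfolding assign_true_def by simp
  have "?A \<subset> set \<Phi>" using assms unfolding pos_units_def by auto
  hence "card ?A < card (set \<Phi>)" by (simp add: psubset_card_mono)
  moreover have "card (?f ` ?A) \<le> card ?A" by (rule card_image_le) simp
  ultimately show ?thesis using eq by simp
qed

text \<open>The first argument t is the number of currently unassigned
  variables, i.e. the current stage. The result is (s, b): PUR terminated at stage s,
  accepting (b = True) or rejecting (b = False).\<close>
function pur :: "nat \<Rightarrow> clause list \<Rightarrow> (nat \<times> bool) pmf" where
  "pur t \<Phi> =
     (if pos_units \<Phi> = {} then return_pmf (t, True)
      else pmf_of_set (pos_units \<Phi>) \<bind>
        (\<lambda>i. if ({}, {i}) \<in> set \<Phi> then return_pmf (t, False)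
             else pur (t - 1) (assign_true i \<Phi>)))"
  by auto
termination
proof (relation "Wellfounded.measure (\<lambda>(t, \<Phi>). card (set \<Phi>))")
  show "wf (Wellfounded.measure (\<lambda>(t, \<Phi>). card (set \<Phi>)))" by simp
next
  fix t \<Phi> i
  assume "pos_units \<Phi> \<noteq> {}" "i \<in> set_pmf (pmf_of_set (pos_units \<Phi>))"
  hence "i \<in> pos_units \<Phi>" using finite_pos_units by simp
  thus "((t - 1, assign_true i \<Phi>), t, \<Phi>) \<in> Wellfounded.measure (\<lambda>(t, \<Phi>). card (set \<Phi>))"
    using card_assign_true_less by simp
qed

definition pur_run :: "nat \<Rightarrow> nat \<Rightarrow> (nat \<times> bool) pmf" where
  "pur_run n m = formula_pmf n m \<bind> pur n"

definition reaches_stage :: "nat \<Rightarrow> nat \<times> bool \<Rightarrow> bool" where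
  "reaches_stage t r \<longleftrightarrow> fst r \<le> t"

definition rejects_at_stage :: "nat \<Rightarrow> nat \<times> bool \<Rightarrow> bool" where
  "rejects_at_stage t r \<longleftrightarrow> fst r = t \<and> \<not> snd r"

end

theory Submission
  imports Defs "HOL-Real_Asymp.Real_Asymp"
begin

text \<open>
  Split PUR according to the sequence of the n - p variables it sets before stage p: the
  probability of reaching stage p is the total weight of these paths. After a path with variable
  set A, PUR fails to reject only if the formula misses a family of at least 2^(n-p-1) clauses
  that the path itself never inspects: positive clauses that would provide a further unit (if
  there is none), or negative clauses that would refute the chosen unit. Since clauses are
  independent, this costs a factor 1 - 2^(n-p-1)/|H_n| for every clause whose negative part is not
  inside A. Outside an event of probability exponentially small in m, every A with |A| < n has at
  least m/4 such clauses, so the weight of not rejecting is at most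
  2 exp(-(c/8 - o(1)) 2^(n - log n - p)) times the probability of reaching stage p, plus that
  event. The latter probability is at least that of a formula starting with the units
  x_1, ..., x_(n-p) followed by clauses with a positive literal only, which is still far larger
  than the exceptional event.
\<close>

section \<open>Counting Horn clauses\<close>

definition positive_parts :: "nat \<Rightarrow> nat set set" where
  "positive_parts n = insert {} ((\<lambda>i. {i}) ` {1..n})"

lemma card_positive_parts: "card (positive_parts n) = n + 1"
proof -
  have "card ((\<lambda>i. {i::nat}) ` {1..n}) = n"
    by (subst card_image) (auto simp: inj_on_def)
  then show ?thesis
    unfolding positive_parts_def by (subst card_insert_disjoint) auto
qed

lemma finite_positive_parts: "finite (positive_parts n)"
  unfolding positive_parts_def by simp

lemma horn_clauses_eq: "horn_clauses n = positive_parts n \<times> Pow {1..n} - {({}, {})}"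
  unfolding horn_clauses_def positive_parts_def by auto

lemma finite_horn_clauses: "finite (horn_clauses n)"
  unfolding horn_clauses_eq by (simp add: finite_positive_parts)

lemma card_horn_clauses: "card (horn_clauses n) = (n + 1) * 2 ^ n - 1"
proof -
  have "({}, {}) \<in> positive_parts n \<times> Pow {1..n}"
    unfolding positive_parts_def by auto
  then show ?thesis
    unfolding horn_clauses_eq
    by (subst card_Diff_singleton)
      (auto simp: card_cartesian_product card_positive_parts card_Pow finite_positive_parts)
qed

lemma card_horn_clauses_ge:
  assumes "1 \<le> n" "k \<le> n"
  shows "(2::real) ^ k \<le> card (horn_clauses n)"
proof -
  have "1 \<le> n * 2 ^ n" using assms by simp
  moreover have "(n + 1) * 2 ^ n - 1 = 2 ^ n + n * 2 ^ n - (1::nat)"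
    by (simp add: algebra_simps)
  ultimately have "2 ^ n \<le> card (horn_clauses n)"
    unfolding card_horn_clauses by linarith
  then have "(2::real) ^ n \<le> card (horn_clauses n)"
    by (metis of_nat_le_iff of_nat_numeral of_nat_power)
  moreover have "(2::real) ^ k \<le> 2 ^ n"
    using assms(2) by (intro power_increasing) auto
  ultimately show ?thesis by linarith
qed

lemma card_horn_clauses_le: "card (horn_clauses n) \<le> (n + 1) * 2 ^ n"
  unfolding card_horn_clauses by simp

lemma card_horn_clauses_pos: "n \<ge> 1 \<Longrightarrow> card (horn_clauses n) > 0"
  using card_horn_clauses_ge[of n 0] by simp

lemma card_horn_clauses_positive: "card {c \<in> horn_clauses n. fst c \<noteq> {}} = n * 2 ^ n"
proof -
  have "{c \<in> horn_clauses n. fst c \<noteq> {}} = ((\<lambda>i. {i}) ` {1..n}) \<times> Pow {1..n}"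
    unfolding horn_clauses_def by auto
  moreover have "card ((\<lambda>i. {i::nat}) ` {1..n}) = n"
    by (subst card_image) (auto simp: inj_on_def)
  ultimately show ?thesis by (simp add: card_cartesian_product card_Pow)
qed

lemma card_horn_clauses_negatives_within:
  assumes "A \<subseteq> {1..n}"
  shows "card {c \<in> horn_clauses n. snd c \<subseteq> A} \<le> (n + 1) * 2 ^ card A"
proof -
  have fin: "finite A" using assms finite_subset by blast
  have "{c \<in> horn_clauses n. snd c \<subseteq> A} \<subseteq> positive_parts n \<times> Pow A"
    unfolding horn_clauses_eq by auto
  then have "card {c \<in> horn_clauses n. snd c \<subseteq> A} \<le> card (positive_parts n \<times> Pow A)"
    by (intro card_mono) (auto simp: finite_positive_parts fin)
  also have "\<dots> = (n + 1) * 2 ^ card A"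
    by (simp add: card_cartesian_product card_positive_parts card_Pow fin)
  finally show ?thesis .
qed

lemma card_image_insert_Pow:
  assumes "finite B" "l \<notin> B"
  shows "card ((\<lambda>T. (P, insert l T)) ` Pow B) = 2 ^ card B"
proof -
  have "inj_on (\<lambda>T. (P, insert l T)) (Pow B)"
    using assms(2) unfolding inj_on_def by (auto simp: insert_ident)
  then show ?thesis using assms by (simp add: card_image card_Pow)
qed

section \<open>Averages over lists with independent entries\<close>

text \<open>For X = horn_clauses n this is the expectation over \<Omega>(n,m)
  (see measure_formula_pmf_bind).\<close>
fun list_avg :: "'a set \<Rightarrow> nat \<Rightarrow> ('a list \<Rightarrow> real) \<Rightarrow> real" where
  "list_avg X 0 f = f []"
| "list_avg X (Suc m) f = (\<Sum>c\<in>X. list_avg X m (\<lambda>xs. f (c # xs))) / card X"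

lemma list_avg_mono:
  assumes "\<And>xs. set xs \<subseteq> X \<Longrightarrow> length xs = m \<Longrightarrow> f xs \<le> g xs"
  shows "list_avg X m f \<le> list_avg X m g"
  using assms
proof (induction m arbitrary: f g)
  case (Suc m)
  have "(\<Sum>c\<in>X. list_avg X m (\<lambda>xs. f (c # xs))) \<le> (\<Sum>c\<in>X. list_avg X m (\<lambda>xs. g (c # xs)))"
    by (intro sum_mono Suc.IH) (auto intro!: Suc.prems)
  then show ?case by (simp add: divide_right_mono)
qed simp

lemma list_avg_cong:
  "(\<And>xs. set xs \<subseteq> X \<Longrightarrow> length xs = m \<Longrightarrow> f xs = g xs) \<Longrightarrow> list_avg X m f = list_avg X m g"
  using list_avg_mono[of X m f g] list_avg_mono[of X m g f] by force

lemma list_avg_add: "list_avg X m (\<lambda>xs. f xs + g xs) = list_avg X m f + list_avg X m g"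
  by (induction m arbitrary: f g) (simp_all add: sum.distrib add_divide_distrib)

lemma list_avg_cmult: "list_avg X m (\<lambda>xs. a * f xs) = a * list_avg X m f"
  by (induction m arbitrary: f) (simp_all add: sum_distrib_left)

lemma list_avg_zero [simp]: "list_avg X m (\<lambda>xs. 0) = 0"
  by (induction m) simp_all

lemma list_avg_sum:
  "finite I \<Longrightarrow> list_avg X m (\<lambda>xs. \<Sum>i\<in>I. f i xs) = (\<Sum>i\<in>I. list_avg X m (f i))"
  by (induction I rule: finite_induct) (simp_all add: list_avg_add)

lemma list_avg_nonneg:
  "(\<And>xs. set xs \<subseteq> X \<Longrightarrow> length xs = m \<Longrightarrow> f xs \<ge> 0) \<Longrightarrow> list_avg X m f \<ge> 0"
  using list_avg_mono[of X m "\<lambda>_. 0" f] by simp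

lemma list_avg_prod:
  "list_avg X m (\<lambda>xs. \<Prod>k<m. g k (xs ! k)) = (\<Prod>k<m. (\<Sum>c\<in>X. g k c) / card X)"
proof (induction m arbitrary: g)
  case (Suc m)
  have "list_avg X (Suc m) (\<lambda>xs. \<Prod>k<Suc m. g k (xs ! k))
      = (\<Sum>c\<in>X. list_avg X m (\<lambda>xs. g 0 c * (\<Prod>k<m. g (Suc k) (xs ! k)))) / card X"
    by (simp only: list_avg.simps prod.lessThan_Suc_shift nth_Cons_0 nth_Cons_Suc)
  also have "\<dots> = (\<Sum>c\<in>X. g 0 c * (\<Prod>k<m. (\<Sum>c\<in>X. g (Suc k) c) / card X)) / card X"
    by (simp add: list_avg_cmult Suc.IH[of "\<lambda>k. g (Suc k)"])
  also have "\<dots> = (\<Prod>k<Suc m. (\<Sum>c\<in>X. g k c) / card X)"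
    by (simp only: prod.lessThan_Suc_shift) (simp add: sum_distrib_right[symmetric] mult_ac)
  finally show ?case .
qed simp

lemma sum_uniform_le_1:
  assumes "finite I"
  shows "(\<Sum>i\<in>I. if i \<in> U then 1 / real (card U) else 0) \<le> 1"
proof -
  have "(\<Sum>i\<in>I. if i \<in> U then 1 / real (card U) else 0) = card (I \<inter> U) / card U"
    using assms by (simp add: sum.If_cases Int_def)
  also have "\<dots> \<le> 1"
    using assms by (cases "finite U \<and> U \<noteq> {}") (auto simp: divide_le_eq_1 card_mono card_gt_0_iff)
  finally show ?thesis .
qed

lemma list_avg_sum_mult_le:
  assumes "finite I" "\<And>xs. 0 \<le> W xs" "\<And>xs. (\<Sum>i\<in>I. u i xs) \<le> 1"
  shows "(\<Sum>i\<in>I. list_avg X m (\<lambda>xs. W xs * u i xs)) \<le> list_avg X m W"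
proof -
  have "(\<Sum>i\<in>I. list_avg X m (\<lambda>xs. W xs * u i xs)) = list_avg X m (\<lambda>xs. W xs * (\<Sum>i\<in>I. u i xs))"
    using assms(1) by (simp add: list_avg_sum sum_distrib_left)
  also have "\<dots> \<le> list_avg X m W"
    using assms(2,3) by (intro list_avg_mono mult_left_le)
  finally show ?thesis .
qed

lemma power2_length_filter: "(2::real) ^ length (filter P xs) = (\<Prod>k<length xs. if P (xs ! k) then 2 else 1)"
  by (induction xs) (simp_all add: prod.lessThan_Suc_shift del: prod.lessThan_Suc)

text \<open>Markov's inequality for 2 to the number of entries satisfying P, whose average factorises.\<close>
lemma list_avg_few_failures_le:
  assumes "finite X"
  shows "list_avg X m (\<lambda>xs. if length (filter (\<lambda>x. \<not> P x) xs) < M then 1 else 0)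
    \<le> ((real (card X) + real (card {x \<in> X. P x})) / card X) ^ m / 2 ^ (m - M)"
proof -
  define h where "h x = (if P x then 2 else (1::real))" for x
  have "list_avg X m (\<lambda>xs. if length (filter (\<lambda>x. \<not> P x) xs) < M then 1 else 0)
      \<le> list_avg X m (\<lambda>xs. 1 / 2 ^ (m - M) * (\<Prod>k<m. h (xs ! k)))"
  proof (rule list_avg_mono)
    fix xs :: "'a list"
    assume "length xs = m"
    then have "length (filter P xs) + length (filter (\<lambda>x. \<not> P x) xs) = m"
      and "(\<Prod>k<m. h (xs ! k)) = 2 ^ length (filter P xs)"
      unfolding h_def power2_length_filter using sum_length_filter_compl[of P xs] by auto
    then show "(if length (filter (\<lambda>x. \<not> P x) xs) < M then 1 else 0)
        \<le> 1 / 2 ^ (m - M) * (\<Prod>k<m. h (xs ! k))"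
      by (auto simp: power_increasing)
  qed
  also have "\<dots> = ((\<Sum>x\<in>X. h x) / card X) ^ m / 2 ^ (m - M)"
    by (simp only: list_avg_cmult list_avg_prod[of _ m "\<lambda>_. h"]) simp
  also have "(\<Sum>x\<in>X. h x) = (\<Sum>x\<in>X. 1 + (if P x then 1 else 0))"
    by (intro sum.cong) (auto simp: h_def)
  also have "\<dots> = real (card X) + real (card {x \<in> X. P x})"
    using assms by (simp add: sum.distrib sum.If_cases Int_def)
  finally show ?thesis .
qed

lemma card_avoiding_le:
  assumes "finite X" "R \<inter> K = {}"
  shows "real (card (X - R - K)) \<le> card (X - R) * (1 - card (K \<inter> X) / card X)"
proof -
  have "card (X - R - K) = card (X - R) - card (K \<inter> X)"
    using assms by (subst card_Diff_subset[symmetric]) (auto intro!: arg_cong[where f = card])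
  moreover have "card (K \<inter> X) \<le> card (X - R)"
    using assms by (intro card_mono) auto
  moreover have "card (X - R) * (card (K \<inter> X) / card X) \<le> card (K \<inter> X)"
    using card_mono[OF assms(1), of "X - R"]
    by (cases "card X = 0") (auto simp: field_simps mult_right_mono)
  ultimately show ?thesis by (simp add: of_nat_diff algebra_simps)
qed

lemma list_avg_avoid_le:
  fixes F :: "'a list \<Rightarrow> real"
  assumes X: "finite X" and RK: "R \<inter> K = {}" and F: "\<And>xs. F xs \<ge> 0"
  defines "q \<equiv> card (K \<inter> X) / card X"
  shows "list_avg X m (\<lambda>xs. F (filter (\<lambda>x. x \<in> R) xs) * (if set xs \<inter> K = {} then 1 else 0))
       \<le> list_avg X m (\<lambda>xs. F (filter (\<lambda>x. x \<in> R) xs) * (1 - q) ^ length (filter (\<lambda>x. x \<notin> R) xs))"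
  using F
proof (induction m arbitrary: F)
  case (Suc m)
  let ?L = "\<lambda>F. list_avg X m (\<lambda>xs. F (filter (\<lambda>x. x \<in> R) xs) * (if set xs \<inter> K = {} then 1 else 0))"
  let ?R = "\<lambda>F. list_avg X m
    (\<lambda>xs. F (filter (\<lambda>x. x \<in> R) xs) * (1 - q) ^ length (filter (\<lambda>x. x \<notin> R) xs))"
  have q: "0 \<le> q" "q \<le> 1"
    unfolding q_def using card_mono[OF X, of "K \<inter> X"]
    by (auto simp: divide_le_eq_1 card_gt_0_iff)
  have R0: "?R F \<ge> 0"
    using Suc.prems q by (intro list_avg_nonneg) auto
  have "?L (\<lambda>xs. F (c # xs)) \<le> ?R (\<lambda>xs. F (c # xs))" for c
    using Suc.IH[of "\<lambda>xs. F (c # xs)"] Suc.prems by simp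
  moreover have "?L F \<le> ?R F"
    using Suc.IH Suc.prems by simp
  ultimately have "(\<Sum>c\<in>X. list_avg X m (\<lambda>xs. F (filter (\<lambda>x. x \<in> R) (c # xs))
                                    * (if set (c # xs) \<inter> K = {} then 1 else 0)))
      \<le> (\<Sum>c\<in>X. if c \<in> R then ?R (\<lambda>xs. F (c # xs)) else if c \<in> K then 0 else ?R F)"
    using RK by (intro sum_mono) (auto simp: list_avg_cmult[symmetric] mult_ac)
  also have "\<dots> = (\<Sum>c\<in>X \<inter> R. ?R (\<lambda>xs. F (c # xs))) + card (X - R - K) * ?R F"
    using X by (simp add: sum.If_cases Diff_eq Int_ac)
  also have "\<dots> \<le> (\<Sum>c\<in>X \<inter> R. ?R (\<lambda>xs. F (c # xs))) + card (X - R) * (1 - q) * ?R F"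
    using card_avoiding_le[OF X RK] R0 unfolding q_def by (intro add_left_mono mult_right_mono)
  also have "\<dots> = (\<Sum>c\<in>X. if c \<in> R then ?R (\<lambda>xs. F (c # xs)) else (1 - q) * ?R F)"
    using X by (simp add: sum.If_cases Diff_eq)
  also have "\<dots> = (\<Sum>c\<in>X. list_avg X m (\<lambda>xs. F (filter (\<lambda>x. x \<in> R) (c # xs))
                                   * (1 - q) ^ length (filter (\<lambda>x. x \<notin> R) (c # xs))))"
    by (intro sum.cong) (auto simp: list_avg_cmult[symmetric] mult_ac)
  finally show ?case
    unfolding list_avg.simps by (rule divide_right_mono) simp
qed simp

lemma measure_bind_pmf_of_set:
  assumes "finite U" "U \<noteq> {}"
  shows "measure_pmf.prob (pmf_of_set U \<bind> f) A = (\<Sum>i\<in>U. measure_pmf.prob (f i) A) / card U"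
proof -
  have "emeasure (measure_pmf (pmf_of_set U \<bind> f)) A = (\<Sum>i\<in>U. emeasure (measure_pmf (f i)) A) / card U"
    using assms by (simp add: nn_integral_pmf_of_set)
  also have "\<dots> = ennreal ((\<Sum>i\<in>U. measure (f i) A) / card U)"
    using assms by (simp add: measure_pmf.emeasure_eq_measure sum_nonneg divide_ennreal
        ennreal_of_nat_eq_real_of_nat card_gt_0_iff)
  finally show ?thesis
    by (simp add: measure_pmf.emeasure_eq_measure sum_nonneg divide_nonneg_nonneg)
qed

lemma measure_formula_pmf_bind:
  assumes "n \<ge> 1"
  shows "measure_pmf.prob (formula_pmf n m \<bind> g) A
    = list_avg (horn_clauses n) m (\<lambda>\<Phi>. measure_pmf.prob (g \<Phi>) A)"
proof (induction m arbitrary: g)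
  case (Suc m)
  have "formula_pmf n (Suc m) \<bind> g
      = pmf_of_set (horn_clauses n) \<bind> (\<lambda>c. formula_pmf n m \<bind> (\<lambda>xs. g (c # xs)))"
    by (simp add: bind_assoc_pmf bind_map_pmf)
  moreover have "horn_clauses n \<noteq> {}"
    using card_horn_clauses_pos[OF assms] by auto
  ultimately show ?case
    using Suc by (simp add: measure_bind_pmf_of_set finite_horn_clauses)
qed (simp add: bind_return_pmf)

section \<open>PUR as a sum over paths\<close>

declare pur.simps [simp del]

definition reduce :: "nat set \<Rightarrow> clause list \<Rightarrow> clause list" where
  "reduce B \<Phi> = map (\<lambda>(P, S). (P, S - B)) (filter (\<lambda>(P, S). P \<inter> B = {}) \<Phi>)"

lemma reduce_empty [simp]: "reduce {} \<Phi> = \<Phi>"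
  unfolding reduce_def by (induction \<Phi>) auto

lemma assign_true_reduce: "assign_true i (reduce B \<Phi>) = reduce (insert i B) \<Phi>"
  unfolding reduce_def assign_true_def by (induction \<Phi>) auto

lemma mem_reduce:
  "(P, S') \<in> set (reduce B \<Phi>) \<longleftrightarrow> (\<exists>S. (P, S) \<in> set \<Phi> \<and> P \<inter> B = {} \<and> S' = S - B)"
  unfolding reduce_def by (auto simp: image_iff)

lemma pos_units_reduce:
  "pos_units (reduce B \<Phi>) = {j. j \<notin> B \<and> (\<exists>S. ({j}, S) \<in> set \<Phi> \<and> S \<subseteq> B)}"
  unfolding pos_units_def mem_reduce by auto

lemma neg_unit_reduce: "({}, {i}) \<in> set (reduce B \<Phi>) \<longleftrightarrow> (\<exists>S. ({}, S) \<in> set \<Phi> \<and> S - B = {i})"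
  unfolding mem_reduce by auto

lemma pos_units_reduce_subset:
  "set \<Phi> \<subseteq> horn_clauses n \<Longrightarrow> pos_units (reduce B \<Phi>) \<subseteq> {1..n} - B"
  unfolding pos_units_reduce horn_clauses_def by auto

lemma pos_units_reduce_cong:
  "(\<And>x. snd x \<subseteq> B \<Longrightarrow> x \<in> set \<Phi> \<longleftrightarrow> x \<in> set \<Phi>') \<Longrightarrow>
    pos_units (reduce B \<Phi>) = pos_units (reduce B \<Phi>')"
  unfolding pos_units_reduce by (metis (no_types, lifting) snd_conv)

lemma neg_unit_reduce_cong:
  "(\<And>S. S \<subseteq> insert i B \<Longrightarrow> ({}, S) \<in> set \<Phi> \<longleftrightarrow> ({}, S) \<in> set \<Phi>') \<Longrightarrow>
    ({}, {i}) \<in> set (reduce B \<Phi>) \<longleftrightarrow> ({}, {i}) \<in> set (reduce B \<Phi>')"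
  unfolding neg_unit_reduce by blast

lemma pur_stage_le: "r \<in> set_pmf (pur t \<Psi>) \<Longrightarrow> fst r \<le> t"
proof (induction t \<Psi> arbitrary: r rule: pur.induct)
  case (1 t \<Phi>)
  show ?case
  proof (cases "pos_units \<Phi> = {}")
    case True
    then show ?thesis using "1.prems" by (simp add: pur.simps)
  next
    case units: False
    then obtain i where i: "i \<in> pos_units \<Phi>" and
      r: "r \<in> set_pmf (if ({}, {i}) \<in> set \<Phi> then return_pmf (t, False)
                        else pur (t - 1) (assign_true i \<Phi>))"
      using "1.prems" finite_pos_units by (auto simp: pur.simps)
    show ?thesis
    proof (cases "({}, {i}) \<in> set \<Phi>")
      case True
      then show ?thesis using r by simp
    next
      case False
      then have "fst r \<le> t - 1"
        using "1.IH"[OF units _ False] units i r finite_pos_units by simp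
      then show ?thesis by simp
    qed
  qed
qed

lemma measure_pur:
  "measure_pmf.prob (pur t \<Psi>) E =
    (if pos_units \<Psi> = {} then indicator E (t, True)
     else (\<Sum>i\<in>pos_units \<Psi>. if ({}, {i}) \<in> set \<Psi> then indicator E (t, False)
                              else measure_pmf.prob (pur (t - 1) (assign_true i \<Psi>)) E)
          / card (pos_units \<Psi>))"
  by (subst pur.simps)
    (simp add: measure_bind_pmf_of_set finite_pos_units if_distrib[of "\<lambda>p. measure_pmf.prob p E"]
      cong: if_cong)

text \<open>The probability that PUR, started on reduce B \<Phi>, first sets the variables i # is to true
  in this order.\<close>
fun path_weight :: "clause list \<Rightarrow> nat set \<Rightarrow> nat list \<Rightarrow> real" where
  "path_weight \<Phi> B [] = 1"
| "path_weight \<Phi> B (i # is) =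
     (if i \<in> pos_units (reduce B \<Phi>) \<and> ({}, {i}) \<notin> set (reduce B \<Phi>)
      then 1 / card (pos_units (reduce B \<Phi>)) else 0) * path_weight \<Phi> (insert i B) is"

lemma path_weight_nonneg: "path_weight \<Phi> B is \<ge> 0"
  by (induction "is" arbitrary: B) auto

lemma path_weight_eq_0_if_not_distinct: "\<not> distinct is \<Longrightarrow> path_weight \<Phi> {} is = 0"
proof -
  have "path_weight \<Phi> B is \<noteq> 0 \<Longrightarrow> distinct is \<and> set is \<inter> B = {}" for B
  proof (induction "is" arbitrary: B)
    case (Cons i "is")
    then have "i \<in> pos_units (reduce B \<Phi>)" and "path_weight \<Phi> (insert i B) is \<noteq> 0"
      by (auto split: if_splits)
    with Cons.IH show ?case by (auto simp: pos_units_reduce)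
  qed simp
  then show "\<not> distinct is \<Longrightarrow> path_weight \<Phi> {} is = 0" by blast
qed

text \<open>Up to its last step, a path only inspects clauses whose negative part lies inside the
  variables already set; the last step in addition inspects negative clauses inside all of them.\<close>
lemma path_weight_cong:
  assumes "\<And>x. snd x \<subseteq> B \<union> set (butlast is) \<or> (fst x = {} \<and> snd x \<subseteq> B \<union> set is) \<Longrightarrow>
      x \<in> set \<Phi> \<longleftrightarrow> x \<in> set \<Phi>'"
  shows "path_weight \<Phi> B is = path_weight \<Phi>' B is"
  using assms
proof (induction "is" arbitrary: B)
  case (Cons i "is")
  have "pos_units (reduce B \<Phi>) = pos_units (reduce B \<Phi>')"
    by (rule pos_units_reduce_cong) (rule Cons.prems, auto)
  moreover have "({}, {i}) \<in> set (reduce B \<Phi>) \<longleftrightarrow> ({}, {i}) \<in> set (reduce B \<Phi>')"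
    by (rule neg_unit_reduce_cong) (rule Cons.prems, auto)
  moreover have "path_weight \<Phi> (insert i B) is = path_weight \<Phi>' (insert i B) is"
    by (cases "is = []") (simp, rule Cons.IH, rule Cons.prems, auto)
  ultimately show ?case by simp
qed simp

definition var_seqs :: "nat \<Rightarrow> nat \<Rightarrow> nat list set" where
  "var_seqs n k = {xs. set xs \<subseteq> {1..n} \<and> length xs = k}"

lemma finite_var_seqs: "finite (var_seqs n k)"
  unfolding var_seqs_def by (rule finite_lists_length_eq) simp

lemma sum_var_seqs_Suc:
  "(\<Sum>xs\<in>var_seqs n (Suc k). f xs) = (\<Sum>i\<in>{1..n}. \<Sum>xs\<in>var_seqs n k. f (i # xs))"
proof -
  have "var_seqs n (Suc k) = (\<lambda>(xs, i). i # xs) ` (var_seqs n k \<times> {1..n})"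
    unfolding var_seqs_def lists_length_Suc_eq by auto
  then have "(\<Sum>xs\<in>var_seqs n (Suc k). f xs) = (\<Sum>(xs, i)\<in>var_seqs n k \<times> {1..n}. f (i # xs))"
    by (simp add: sum.reindex inj_on_def case_prod_unfold)
  also have "\<dots> = (\<Sum>xs\<in>var_seqs n k. \<Sum>i\<in>{1..n}. f (i # xs))"
    by (simp add: sum.cartesian_product)
  also have "\<dots> = (\<Sum>i\<in>{1..n}. \<Sum>xs\<in>var_seqs n k. f (i # xs))"
    by (rule sum.swap)
  finally show ?thesis .
qed

text \<open>Markov property of PUR over k steps, for events that need at least k more steps.\<close>
lemma measure_pur_reduce_path:
  assumes "set \<Phi> \<subseteq> horn_clauses n" and "\<And>r. r \<in> E \<Longrightarrow> fst r + k \<le> t"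
  shows "measure_pmf.prob (pur t (reduce B \<Phi>)) E =
    (\<Sum>is\<in>var_seqs n k.
       path_weight \<Phi> B is * measure_pmf.prob (pur (t - k) (reduce (B \<union> set is) \<Phi>)) E)"
  using assms(2)
proof (induction k arbitrary: t B)
  case 0
  have "var_seqs n 0 = {[]}" unfolding var_seqs_def by auto
  then show ?case by simp
next
  case (Suc k)
  let ?U = "pos_units (reduce B \<Phi>)"
  let ?P = "\<lambda>B. measure_pmf.prob (pur (t - Suc 0) (reduce B \<Phi>)) E"
  let ?c = "\<lambda>i. if i \<in> ?U \<and> ({}, {i}) \<notin> set (reduce B \<Phi>) then 1 / card ?U else 0"
  have IH: "?P (insert i B) = (\<Sum>is\<in>var_seqs n k. path_weight \<Phi> (insert i B) is *
      measure_pmf.prob (pur (t - Suc k) (reduce (B \<union> set (i # is)) \<Phi>)) E)" for i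
    using Suc.IH[of "t - 1" "insert i B"] Suc.prems by fastforce
  have not_now: "(t, b) \<notin> E" for b
    using Suc.prems by fastforce
  have "(\<Sum>is\<in>var_seqs n (Suc k).
          path_weight \<Phi> B is * measure_pmf.prob (pur (t - Suc k) (reduce (B \<union> set is) \<Phi>)) E)
      = (\<Sum>i\<in>{1..n}. ?c i * ?P (insert i B))"
    by (simp add: sum_var_seqs_Suc IH sum_distrib_left mult.assoc)
  also have "\<dots> = (\<Sum>i\<in>?U. ?c i * ?P (insert i B))"
    using pos_units_reduce_subset[OF assms(1), of B] by (intro sum.mono_neutral_right) auto
  also have "\<dots> = measure_pmf.prob (pur t (reduce B \<Phi>)) E"
    using not_now
    by (subst measure_pur[of t])
      (auto simp: assign_true_reduce sum_divide_distrib indicator_def cong: if_cong split: if_splits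
        intro!: sum.cong)
  finally show ?case by simp
qed

text \<open>The conditional probability that PUR rejects in its next step (0 if it accepts instead).\<close>
definition reject_ratio :: "clause list \<Rightarrow> nat set \<Rightarrow> real" where
  "reject_ratio \<Phi> A =
     card {i \<in> pos_units (reduce A \<Phi>). ({}, {i}) \<in> set (reduce A \<Phi>)} / card (pos_units (reduce A \<Phi>))"

lemma reject_ratio_le_1: "reject_ratio \<Phi> A \<le> 1"
  unfolding reject_ratio_def
  by (cases "pos_units (reduce A \<Phi>) = {}")
    (auto simp: divide_le_eq_1 card_mono finite_pos_units card_gt_0_iff)

lemma prob_pur_reaches_stage:
  assumes "set \<Phi> \<subseteq> horn_clauses n" "s \<le> n"
  shows "measure_pmf.prob (pur n \<Phi>) (Collect (reaches_stage s))
    = (\<Sum>is\<in>var_seqs n (n - s). path_weight \<Phi> {} is)"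
proof -
  have "measure_pmf.prob (pur s \<Psi>) (Collect (reaches_stage s)) = 1" for \<Psi>
    using pur_stage_le
    by (subst measure_pmf.prob_eq_1) (auto simp: AE_measure_pmf_iff reaches_stage_def)
  then show ?thesis
    using measure_pur_reduce_path[OF assms(1), of "Collect (reaches_stage s)" "n - s" n "{}"] assms(2)
    by (simp add: reaches_stage_def)
qed

lemma sum_path_weight_le_1:
  assumes "set \<Phi> \<subseteq> horn_clauses n" "s \<le> n"
  shows "(\<Sum>is\<in>var_seqs n (n - s). path_weight \<Phi> {} is) \<le> 1"
  using prob_pur_reaches_stage[OF assms] by (metis measure_pmf.prob_le_1)

lemma prob_pur_rejects_at_stage:
  assumes "set \<Phi> \<subseteq> horn_clauses n" "1 \<le> s" "s \<le> n"
  shows "measure_pmf.prob (pur n \<Phi>) (Collect (rejects_at_stage s))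
    = (\<Sum>is\<in>var_seqs n (n - s). path_weight \<Phi> {} is * reject_ratio \<Phi> (set is))"
proof -
  have later: "measure_pmf.prob (pur (s - 1) \<Psi>) (Collect (rejects_at_stage s)) = 0" for \<Psi>
    using pur_stage_le[of _ "s - 1" \<Psi>] assms(2)
    by (subst measure_pmf_zero_iff) (force simp: rejects_at_stage_def)
  have "measure_pmf.prob (pur s \<Psi>) (Collect (rejects_at_stage s))
      = card {i \<in> pos_units \<Psi>. ({}, {i}) \<in> set \<Psi>} / card (pos_units \<Psi>)" for \<Psi>
    by (subst measure_pur)
      (simp add: later[simplified] rejects_at_stage_def sum.If_cases finite_pos_units Int_def cong: if_cong)
  then show ?thesis
    using measure_pur_reduce_path[OF assms(1), of "Collect (rejects_at_stage s)" "n - s" n "{}"]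
      assms(3)
    by (simp add: rejects_at_stage_def reject_ratio_def)
qed

section \<open>Not rejecting at a stage is unlikely\<close>

definition count_outside :: "nat set \<Rightarrow> clause list \<Rightarrow> nat" where
  "count_outside A \<Phi> = length (filter (\<lambda>c. \<not> snd c \<subseteq> A) \<Phi>)"

lemma list_avg_avoid_outside_le:
  fixes F :: "clause list \<Rightarrow> real" and k :: real
  assumes "finite X" "R \<inter> K = {}" "K \<subseteq> X" "\<And>\<Phi>. F \<Phi> \<ge> 0"
    and F_dep: "\<And>\<Phi>. F \<Phi> = F (filter (\<lambda>c. c \<in> R) \<Phi>)"
    and "\<And>c. c \<in> R \<Longrightarrow> snd c \<subseteq> A" and "0 \<le> k" "k \<le> card K"
  shows "list_avg X m (\<lambda>\<Phi>. F \<Phi> * (if set \<Phi> \<inter> K = {} then 1 else 0))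
       \<le> list_avg X m (\<lambda>\<Phi>. F \<Phi> * (1 - k / card X) ^ count_outside A \<Phi>)"
proof -
  have KX: "K \<inter> X = K" "card K \<le> card X"
    using assms(3) card_mono[OF assms(1,3)] by auto
  have "1 - card (K \<inter> X) / card X \<le> 1 - k / card X" "0 \<le> 1 - card (K \<inter> X) / card X"
    using assms(8) KX by (auto intro!: divide_right_mono simp: divide_le_eq_1)
  moreover have "0 \<le> 1 - k / card X" "1 - k / card X \<le> 1"
    using assms(7,8) KX by (auto simp: divide_le_eq_1)
  moreover have "count_outside A \<Phi> \<le> length (filter (\<lambda>c. c \<notin> R) \<Phi>)" for \<Phi>
    unfolding count_outside_def using assms(6) by (induction \<Phi>) auto
  ultimately have pow: "(1 - card (K \<inter> X) / card X) ^ length (filter (\<lambda>c. c \<notin> R) \<Phi>)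
      \<le> (1 - k / card X) ^ count_outside A \<Phi>" for \<Phi>
    by (meson order_trans power_decreasing power_mono)
  have "list_avg X m (\<lambda>\<Phi>. F \<Phi> * (if set \<Phi> \<inter> K = {} then 1 else 0))
      = list_avg X m (\<lambda>\<Phi>. F (filter (\<lambda>c. c \<in> R) \<Phi>) * (if set \<Phi> \<inter> K = {} then 1 else 0))"
    by (intro list_avg_cong) (metis F_dep)
  also have "\<dots> \<le> list_avg X m (\<lambda>\<Phi>. F (filter (\<lambda>c. c \<in> R) \<Phi>)
                        * (1 - card (K \<inter> X) / card X) ^ length (filter (\<lambda>c. c \<notin> R) \<Phi>))"
    by (rule list_avg_avoid_le[OF assms(1,2)]) (rule assms(4))
  also have "\<dots> \<le> list_avg X m (\<lambda>\<Phi>. F (filter (\<lambda>c. c \<in> R) \<Phi>) * (1 - k / card X) ^ count_outside A \<Phi>)"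
    by (intro list_avg_mono mult_left_mono assms(4) pow)
  also have "\<dots> = list_avg X m (\<lambda>\<Phi>. F \<Phi> * (1 - k / card X) ^ count_outside A \<Phi>)"
    by (intro list_avg_cong) (metis F_dep)
  finally show ?thesis .
qed

text \<open>PUR does not reject in the next step unless there are no positive units at all, or the
  unit it picks has no negative clause all of whose other variables are already set. Either
  event forces \<Phi> to miss a whole family of clauses.\<close>
lemma one_minus_reject_ratio_le:
  assumes "set \<Phi> \<subseteq> horn_clauses n" "l \<in> A" "B \<subseteq> A" "j \<in> {1..n} - A"
  shows "1 - reject_ratio \<Phi> A
    \<le> (if set \<Phi> \<inter> (\<lambda>T. ({j}, insert l T)) ` Pow B = {} then 1 else 0)
      + (\<Sum>i\<in>{1..n} - A.
           (if i \<in> pos_units (reduce A \<Phi>) then 1 / card (pos_units (reduce A \<Phi>)) else 0)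
           * (if set \<Phi> \<inter> (\<lambda>T. ({}, insert i T)) ` Pow A = {} then 1 else 0))"
    (is "_ \<le> ?G + ?S")
proof (cases "pos_units (reduce A \<Phi>) = {}")
  case True
  have "({j}, insert l T) \<notin> set \<Phi>" if "T \<subseteq> B" for T
    using True that assms by (simp add: pos_units_reduce) (metis insert_subset subset_trans)
  then have "?G = 1" by auto
  moreover have "?S \<ge> 0" by (intro sum_nonneg) auto
  ultimately show ?thesis using True by (simp add: reject_ratio_def)
next
  case False
  let ?U = "pos_units (reduce A \<Phi>)"
  have "card {i \<in> ?U. ({}, {i}) \<in> set (reduce A \<Phi>)} + card {i \<in> ?U. ({}, {i}) \<notin> set (reduce A \<Phi>)}
      = card ?U"
    by (subst card_Un_disjoint[symmetric]) (auto simp: finite_pos_units intro: arg_cong[where f = card])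
  with False have "1 - reject_ratio \<Phi> A = card {i \<in> ?U. ({}, {i}) \<notin> set (reduce A \<Phi>)} / card ?U"
    by (simp add: reject_ratio_def field_simps finite_pos_units)
  also have "\<dots> = (\<Sum>i\<in>{i \<in> ?U. ({}, {i}) \<notin> set (reduce A \<Phi>)}.
      (if i \<in> ?U then 1 / card ?U else 0)
      * (if set \<Phi> \<inter> (\<lambda>T. ({}, insert i T)) ` Pow A = {} then 1 else 0))"
  proof -
    have "set \<Phi> \<inter> (\<lambda>T. ({}, insert i T)) ` Pow A = {}"
      if "i \<in> ?U" "({}, {i}) \<notin> set (reduce A \<Phi>)" for i
    proof -
      have "insert i T - A = {i}" if "T \<subseteq> A" for T
        using \<open>i \<in> ?U\<close> that by (auto simp: pos_units_reduce)
      then show ?thesis using that(2) by (auto simp: neg_unit_reduce)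
    qed
    then show ?thesis by simp
  qed
  also have "\<dots> \<le> ?S"
    using pos_units_reduce_subset[OF assms(1), of A] by (intro sum_mono2) auto
  finally show ?thesis
    by (simp add: add_increasing)
qed

lemma list_avg_path_weight_avoid_le:
  assumes "distinct (xs @ [l])" "set (xs @ [l]) \<subseteq> {1..n}" "j \<in> {1..n} - set (xs @ [l])"
  shows "list_avg (horn_clauses n) m (\<lambda>\<Phi>. path_weight \<Phi> {} (xs @ [l])
           * (if set \<Phi> \<inter> (\<lambda>T. ({j}, insert l T)) ` Pow (set xs) = {} then 1 else 0))
    \<le> list_avg (horn_clauses n) m (\<lambda>\<Phi>. path_weight \<Phi> {} (xs @ [l])
           * (1 - 2 ^ length xs / card (horn_clauses n)) ^ count_outside (set (xs @ [l])) \<Phi>)"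
proof -
  define R where "R = {c :: clause. snd c \<subseteq> set xs \<or> (fst c = {} \<and> snd c \<subseteq> set (xs @ [l]))}"
  show ?thesis
  proof (rule list_avg_avoid_outside_le[where R = R])
    show "path_weight \<Phi> {} (xs @ [l]) = path_weight (filter (\<lambda>c. c \<in> R) \<Phi>) {} (xs @ [l])" for \<Phi>
      by (rule path_weight_cong) (auto simp: R_def)
    show "R \<inter> (\<lambda>T. ({j}, insert l T)) ` Pow (set xs) = {}"
      using assms(1) by (auto simp: R_def)
    show "2 ^ length xs \<le> real (card ((\<lambda>T. ({j}, insert l T)) ` Pow (set xs)))"
      using assms(1) by (simp add: card_image_insert_Pow distinct_card)
    show "(\<lambda>T. ({j}, insert l T)) ` Pow (set xs) \<subseteq> horn_clauses n"
      using assms(2,3) by (auto simp: horn_clauses_def)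
  qed (auto simp: R_def finite_horn_clauses path_weight_nonneg)
qed

lemma list_avg_unit_weight_avoid_le:
  assumes "distinct is" "set is \<subseteq> {1..n}" "i \<in> {1..n} - set is"
    and F: "\<And>\<Phi>. F \<Phi> = path_weight \<Phi> {} is
      * (if i \<in> pos_units (reduce (set is) \<Phi>) then 1 / card (pos_units (reduce (set is) \<Phi>)) else 0)"
  shows "list_avg (horn_clauses n) m
           (\<lambda>\<Phi>. F \<Phi> * (if set \<Phi> \<inter> (\<lambda>T. ({}, insert i T)) ` Pow (set is) = {} then 1 else 0))
    \<le> list_avg (horn_clauses n) m (\<lambda>\<Phi>.
           F \<Phi> * (1 - 2 ^ (length is - 1) / card (horn_clauses n)) ^ count_outside (set is) \<Phi>)"
proof -
  define R where "R = {c :: clause. snd c \<subseteq> set is}"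
  show ?thesis
  proof (rule list_avg_avoid_outside_le[where R = R])
    show "F \<Phi> = F (filter (\<lambda>c. c \<in> R) \<Phi>)" for \<Phi>
    proof -
      have "path_weight \<Phi> {} is = path_weight (filter (\<lambda>c. c \<in> R) \<Phi>) {} is"
        by (rule path_weight_cong) (auto simp: R_def dest: in_set_butlastD)
      moreover have "pos_units (reduce (set is) \<Phi>)
          = pos_units (reduce (set is) (filter (\<lambda>c. c \<in> R) \<Phi>))"
        by (rule pos_units_reduce_cong) (auto simp: R_def)
      ultimately show ?thesis by (simp only: F)
    qed
    show "R \<inter> (\<lambda>T. ({}, insert i T)) ` Pow (set is) = {}"
      using assms(3) by (auto simp: R_def)
    have "(2::real) ^ (length is - 1) \<le> 2 ^ length is"
      by (intro power_increasing) auto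
    then show "2 ^ (length is - 1) \<le> real (card ((\<lambda>T. ({}, insert i T)) ` Pow (set is)))"
      using assms(1,3) by (simp add: card_image_insert_Pow distinct_card)
    show "(\<lambda>T. ({}, insert i T)) ` Pow (set is) \<subseteq> horn_clauses n"
      using assms(2,3) by (auto simp: horn_clauses_def)
    show "0 \<le> F \<Phi>" for \<Phi>
      by (simp add: F path_weight_nonneg)
  qed (auto simp: R_def finite_horn_clauses)
qed

lemma list_avg_path_weight_not_rejecting_le:
  assumes "distinct is" "is \<noteq> []" "set is \<subseteq> {1..n}" "length is < n"
  defines "\<beta> \<equiv> 1 - 2 ^ (length is - 1) / card (horn_clauses n)"
  shows "list_avg (horn_clauses n) m (\<lambda>\<Phi>. path_weight \<Phi> {} is * (1 - reject_ratio \<Phi> (set is)))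
    \<le> 2 * list_avg (horn_clauses n) m (\<lambda>\<Phi>. path_weight \<Phi> {} is * \<beta> ^ count_outside (set is) \<Phi>)"
proof -
  let ?H = "horn_clauses n" and ?A = "set is"
  let ?W = "\<lambda>\<Phi>. path_weight \<Phi> {} is * \<beta> ^ count_outside ?A \<Phi>"
  obtain xs l where is_snoc: "is = xs @ [l]"
    using assms(2) by (metis append_butlast_last_id)
  have "card ?A < card {1..n}"
    using assms(1,4) by (simp add: distinct_card)
  then have "\<not> {1..n} \<subseteq> ?A"
    using card_mono[of ?A "{1..n}"] by auto
  then obtain j where j: "j \<in> {1..n} - ?A"
    by blast
  define G where "G = (\<lambda>T. ({j}, insert l T)) ` Pow (set xs)"
  define K where "K i = (\<lambda>T. ({} :: nat set, insert i T)) ` Pow ?A" for i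
  define u where "u i \<Phi> = (if i \<in> pos_units (reduce ?A \<Phi>) then 1 / card (pos_units (reduce ?A \<Phi>))
    else 0)" for i \<Phi>
  have "path_weight \<Phi> {} is * (1 - reject_ratio \<Phi> ?A)
      \<le> path_weight \<Phi> {} is * ((if set \<Phi> \<inter> G = {} then 1 else 0)
         + (\<Sum>i\<in>{1..n} - ?A. u i \<Phi> * (if set \<Phi> \<inter> K i = {} then 1 else 0)))"
    if "set \<Phi> \<subseteq> ?H" for \<Phi>
    unfolding G_def K_def u_def using j
    by (intro mult_left_mono one_minus_reject_ratio_le[OF that] path_weight_nonneg) (auto simp: is_snoc)
  then have "list_avg ?H m (\<lambda>\<Phi>. path_weight \<Phi> {} is * (1 - reject_ratio \<Phi> ?A))
      \<le> list_avg ?H m (\<lambda>\<Phi>. path_weight \<Phi> {} is * (if set \<Phi> \<inter> G = {} then 1 else 0))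
        + (\<Sum>i\<in>{1..n} - ?A. list_avg ?H m
             (\<lambda>\<Phi>. path_weight \<Phi> {} is * u i \<Phi> * (if set \<Phi> \<inter> K i = {} then 1 else 0)))"
    by (simp add: list_avg_mono distrib_left sum_distrib_left mult_ac
        flip: list_avg_sum[OF finite_Diff[OF finite_atLeastAtMost]] list_avg_add)
  also have "\<dots> \<le> list_avg ?H m ?W + (\<Sum>i\<in>{1..n} - ?A. list_avg ?H m (\<lambda>\<Phi>. ?W \<Phi> * u i \<Phi>))"
  proof (intro add_mono sum_mono)
    show "list_avg ?H m (\<lambda>\<Phi>. path_weight \<Phi> {} is * (if set \<Phi> \<inter> G = {} then 1 else 0))
        \<le> list_avg ?H m ?W"
      using list_avg_path_weight_avoid_le[of xs l n j m] assms j
      by (simp add: is_snoc G_def \<beta>_def)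
    show "list_avg ?H m (\<lambda>\<Phi>. path_weight \<Phi> {} is * u i \<Phi> * (if set \<Phi> \<inter> K i = {} then 1 else 0))
        \<le> list_avg ?H m (\<lambda>\<Phi>. ?W \<Phi> * u i \<Phi>)"
      if "i \<in> {1..n} - ?A" for i
      using list_avg_unit_weight_avoid_le[OF assms(1,3) that, of "\<lambda>\<Phi>. path_weight \<Phi> {} is * u i \<Phi>"]
      by (simp add: K_def \<beta>_def u_def mult_ac)
  qed
  also have "\<dots> \<le> list_avg ?H m ?W + list_avg ?H m ?W"
  proof (intro add_left_mono list_avg_sum_mult_le)
    have "0 \<le> \<beta>"
      unfolding \<beta>_def using card_horn_clauses_ge[of n "length is - 1"] assms(4)
      by (auto simp: divide_le_eq_1)
    then show "0 \<le> ?W \<Phi>" for \<Phi>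
      by (simp add: path_weight_nonneg)
  qed (simp_all add: u_def sum_uniform_le_1)
  finally show ?thesis by simp
qed

definition few_outside :: "nat \<Rightarrow> nat \<Rightarrow> clause list \<Rightarrow> bool" where
  "few_outside n M \<Phi> \<longleftrightarrow> (\<exists>A. A \<subseteq> {1..n} \<and> card A < n \<and> count_outside A \<Phi> < M)"

lemma power_count_outside_le:
  fixes \<beta> :: real
  assumes "A \<subseteq> {1..n}" "card A < n" "0 \<le> \<beta>" "\<beta> \<le> 1"
  shows "\<beta> ^ count_outside A \<Phi> \<le> \<beta> ^ M + (if few_outside n M \<Phi> then 1 else 0)"
proof (cases "count_outside A \<Phi> < M")
  case True
  then have "few_outside n M \<Phi>"
    using assms(1,2) unfolding few_outside_def by blast
  then show ?thesis
    using assms(3,4) by (simp add: power_le_one add_increasing)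
next
  case False
  then show ?thesis
    using assms(3,4) by (simp add: power_decreasing add_increasing2)
qed

lemma sum_path_weight_power_count_outside_le:
  fixes \<beta> :: real
  assumes "set \<Phi> \<subseteq> horn_clauses n" "1 \<le> s" "s < n" "0 \<le> \<beta>" "\<beta> \<le> 1"
  shows "(\<Sum>is\<in>var_seqs n (n - s). path_weight \<Phi> {} is * \<beta> ^ count_outside (set is) \<Phi>)
    \<le> \<beta> ^ M * (\<Sum>is\<in>var_seqs n (n - s). path_weight \<Phi> {} is) + (if few_outside n M \<Phi> then 1 else 0)"
proof -
  let ?L = "var_seqs n (n - s)" and ?few = "if few_outside n M \<Phi> then 1 else 0"
  have "path_weight \<Phi> {} is * \<beta> ^ count_outside (set is) \<Phi>
      \<le> path_weight \<Phi> {} is * (\<beta> ^ M + ?few)" if "is \<in> ?L" for "is"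
  proof -
    have "set is \<subseteq> {1..n}" "card (set is) < n"
      using that assms(2,3) card_length[of "is"] by (auto simp: var_seqs_def)
    then show ?thesis
      by (intro mult_left_mono power_count_outside_le path_weight_nonneg assms(4,5))
  qed
  then have "(\<Sum>is\<in>?L. path_weight \<Phi> {} is * \<beta> ^ count_outside (set is) \<Phi>)
      \<le> (\<Sum>is\<in>?L. path_weight \<Phi> {} is * (\<beta> ^ M + ?few))"
    by (rule sum_mono)
  also have "\<dots> = (\<Sum>is\<in>?L. path_weight \<Phi> {} is) * (\<beta> ^ M + ?few)"
    by (rule sum_distrib_right[symmetric])
  also have "\<dots> \<le> \<beta> ^ M * (\<Sum>is\<in>?L. path_weight \<Phi> {} is) + ?few"
    using sum_path_weight_le_1[OF assms(1), of s] assms(3)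
    by (cases "few_outside n M \<Phi>") (simp_all add: algebra_simps)
  finally show ?thesis .
qed

lemma list_avg_not_rejecting_le:
  assumes "1 \<le> s" "s < n"
  defines "\<beta> \<equiv> 1 - 2 ^ (n - s - 1) / card (horn_clauses n)"
  shows "list_avg (horn_clauses n) m
           (\<lambda>\<Phi>. \<Sum>is\<in>var_seqs n (n - s). path_weight \<Phi> {} is * (1 - reject_ratio \<Phi> (set is)))
    \<le> 2 * \<beta> ^ M * list_avg (horn_clauses n) m (\<lambda>\<Phi>. \<Sum>is\<in>var_seqs n (n - s). path_weight \<Phi> {} is)
      + 2 * list_avg (horn_clauses n) m (\<lambda>\<Phi>. if few_outside n M \<Phi> then 1 else 0)"
proof -
  let ?H = "horn_clauses n" and ?L = "var_seqs n (n - s)"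
  have \<beta>: "0 \<le> \<beta>" "\<beta> \<le> 1"
    unfolding \<beta>_def using card_horn_clauses_ge[of n "n - s - 1"] assms(2)
    by (auto simp: divide_le_eq_1)
  have "list_avg ?H m (\<lambda>\<Phi>. path_weight \<Phi> {} is * (1 - reject_ratio \<Phi> (set is)))
      \<le> 2 * list_avg ?H m (\<lambda>\<Phi>. path_weight \<Phi> {} is * \<beta> ^ count_outside (set is) \<Phi>)"
    if "is \<in> ?L" for "is"
  proof (cases "distinct is")
    case True
    have "is \<noteq> []" "set is \<subseteq> {1..n}" "length is = n - s"
      using that assms(2) by (auto simp: var_seqs_def)
    then show ?thesis
      using list_avg_path_weight_not_rejecting_le[OF True, of n m] assms(1,2)
      by (simp add: \<beta>_def)
  qed (simp add: path_weight_eq_0_if_not_distinct)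
  then have "list_avg ?H m (\<lambda>\<Phi>. \<Sum>is\<in>?L. path_weight \<Phi> {} is * (1 - reject_ratio \<Phi> (set is)))
      \<le> 2 * list_avg ?H m (\<lambda>\<Phi>. \<Sum>is\<in>?L. path_weight \<Phi> {} is * \<beta> ^ count_outside (set is) \<Phi>)"
    by (simp add: list_avg_sum finite_var_seqs sum_distrib_left sum_mono)
  also have "\<dots> \<le> 2 * list_avg ?H m (\<lambda>\<Phi>. \<beta> ^ M * (\<Sum>is\<in>?L. path_weight \<Phi> {} is)
      + (if few_outside n M \<Phi> then 1 else 0))"
    by (intro mult_left_mono list_avg_mono sum_path_weight_power_count_outside_le[OF _ assms(1,2) \<beta>])
      auto
  finally show ?thesis
    by (simp add: list_avg_add list_avg_cmult algebra_simps)
qed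

lemma list_avg_count_outside_less_le:
  assumes "A \<subseteq> {1..n}" "card A < n"
  defines "N \<equiv> real (card (horn_clauses n))"
  shows "list_avg (horn_clauses n) m (\<lambda>\<Phi>. if count_outside A \<Phi> < M then 1 else 0)
    \<le> ((N + (n + 1) * 2 ^ (n - 1)) / N) ^ m / 2 ^ (m - M)"
proof -
  have "(n + 1) * 2 ^ card A \<le> (n + 1) * 2 ^ (n - 1)"
    using assms(2) by (intro mult_left_mono power_increasing) auto
  then have "card {c \<in> horn_clauses n. snd c \<subseteq> A} \<le> (n + 1) * 2 ^ (n - 1)"
    using card_horn_clauses_negatives_within[OF assms(1)] by linarith
  then have "real (card {c \<in> horn_clauses n. snd c \<subseteq> A}) \<le> real ((n + 1) * 2 ^ (n - 1))"
    by (rule of_nat_mono)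
  then have "((N + card {c \<in> horn_clauses n. snd c \<subseteq> A}) / N) ^ m / 2 ^ (m - M)
      \<le> ((N + (n + 1) * 2 ^ (n - 1)) / N) ^ m / 2 ^ (m - M)"
    by (auto simp: N_def intro!: divide_right_mono power_mono)
  moreover have "list_avg (horn_clauses n) m (\<lambda>\<Phi>. if count_outside A \<Phi> < M then 1 else 0)
      \<le> ((N + card {c \<in> horn_clauses n. snd c \<subseteq> A}) / N) ^ m / 2 ^ (m - M)"
    unfolding count_outside_def N_def by (rule list_avg_few_failures_le[OF finite_horn_clauses])
  ultimately show ?thesis
    by linarith
qed

lemma list_avg_few_outside_le:
  fixes n m M :: nat
  defines "N \<equiv> real (card (horn_clauses n))"
  shows "list_avg (horn_clauses n) m (\<lambda>\<Phi>. if few_outside n M \<Phi> then 1 else 0)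
    \<le> 2 ^ n * ((N + (n + 1) * 2 ^ (n - 1)) / N) ^ m / 2 ^ (m - M)"
proof -
  define \<A> where "\<A> = {A. A \<subseteq> {1..n} \<and> card A < n}"
  have fin: "finite \<A>" and card: "card \<A> \<le> 2 ^ n"
    using card_mono[of "Pow {1..n}" \<A>] by (auto simp: \<A>_def card_Pow finite_subset)
  have "list_avg (horn_clauses n) m (\<lambda>\<Phi>. if few_outside n M \<Phi> then 1 else 0)
      \<le> list_avg (horn_clauses n) m (\<lambda>\<Phi>. \<Sum>A\<in>\<A>. if count_outside A \<Phi> < M then 1 else 0)"
  proof (rule list_avg_mono)
    fix \<Phi>
    show "(if few_outside n M \<Phi> then 1 else 0)
        \<le> (\<Sum>A\<in>\<A>. if count_outside A \<Phi> < M then 1 else (0::real))"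
    proof (cases "few_outside n M \<Phi>")
      case True
      then obtain A where "A \<in> \<A>" "count_outside A \<Phi> < M"
        unfolding few_outside_def \<A>_def by auto
      moreover have "(if count_outside A \<Phi> < M then 1 else 0)
          \<le> (\<Sum>A\<in>\<A>. if count_outside A \<Phi> < M then 1 else (0::real))"
        by (rule member_le_sum) (auto simp: fin \<open>A \<in> \<A>\<close>)
      ultimately show ?thesis by (simp add: True)
    qed (simp add: sum_nonneg)
  qed
  also have "\<dots> \<le> (\<Sum>A\<in>\<A>. ((N + (n + 1) * 2 ^ (n - 1)) / N) ^ m / 2 ^ (m - M))"
    unfolding list_avg_sum[OF fin] N_def
    by (intro sum_mono list_avg_count_outside_less_le) (auto simp: \<A>_def)
  also have "\<dots> \<le> 2 ^ n * ((N + (n + 1) * 2 ^ (n - 1)) / N) ^ m / 2 ^ (m - M)"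
  proof -
    have "real (card \<A>) \<le> 2 ^ n"
      using card by (metis of_nat_le_iff of_nat_numeral of_nat_power)
    then show ?thesis
      by (simp add: N_def divide_right_mono mult_right_mono)
  qed
  finally show ?thesis .
qed

section \<open>Reaching a stage is not too unlikely\<close>

text \<open>Without negative clauses PUR never rejects, and it cannot stop while one of the positive
  unit clauses x_1, ..., x_K is still unsatisfied.\<close>
lemma pur_stage_le_of_units:
  assumes "\<forall>c\<in>set \<Phi>. fst c \<noteq> {}" "\<forall>i\<in>{1..K}. ({i}, {}) \<in> set \<Phi>"
  shows "r \<in> set_pmf (pur t (reduce B \<Phi>)) \<Longrightarrow> finite B \<Longrightarrow> t + card B = n \<Longrightarrow> fst r \<le> n - K"
proof (induction t "reduce B \<Phi>" arbitrary: r B rule: pur.induct)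
  case (1 t)
  show ?case
  proof (cases "pos_units (reduce B \<Phi>) = {}")
    case True
    have "i \<in> pos_units (reduce B \<Phi>)" if "i \<in> {1..K}" "i \<notin> B" for i
      using assms(2) that unfolding pos_units_reduce by blast
    then have "{1..K} \<subseteq> B"
      using True by blast
    then have "K \<le> card B"
      using card_mono[OF "1.prems"(2)] by (metis card_atLeastAtMost diff_Suc_1)
    moreover have "r = (t, True)"
      using "1.prems"(1) True by (subst (asm) pur.simps) simp
    ultimately show ?thesis using "1.prems"(3) by simp
  next
    case False
    then obtain i where i: "i \<in> pos_units (reduce B \<Phi>)"
      and r: "r \<in> set_pmf (if ({}, {i}) \<in> set (reduce B \<Phi>) then return_pmf (t, False)
                            else pur (t - 1) (assign_true i (reduce B \<Phi>)))"
      using "1.prems"(1) finite_pos_units by (subst (asm) pur.simps) auto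
    have no_neg: "({}, {i}) \<notin> set (reduce B \<Phi>)"
      using assms(1) by (auto simp: neg_unit_reduce)
    show ?thesis
    proof (cases "t = 0")
      case True
      then show ?thesis using pur_stage_le[OF "1.prems"(1)] by simp
    next
      case t: False
      have "i \<notin> B" using i by (simp add: pos_units_reduce)
      then have "t - 1 + card (insert i B) = n"
        using "1.prems"(2,3) t by simp
      moreover have "i \<in> set_pmf (pmf_of_set (pos_units (reduce B \<Phi>)))"
        using i False finite_pos_units by simp
      moreover have "r \<in> set_pmf (pur (t - 1) (reduce (insert i B) \<Phi>))"
        using r no_neg by (simp add: assign_true_reduce)
      ultimately show ?thesis
        using "1.hyps"[OF False _ no_neg assign_true_reduce] "1.prems"(2) by simp
    qed
  qed
qed

lemma prob_pur_reaches_stage_eq_1: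
  assumes "\<forall>c\<in>set \<Phi>. fst c \<noteq> {}" "\<forall>i\<in>{1..n - s}. ({i}, {}) \<in> set \<Phi>" "s \<le> n"
  shows "measure_pmf.prob (pur n \<Phi>) (Collect (reaches_stage s)) = 1"
  using pur_stage_le_of_units[OF assms(1,2), of _ n "{}" n] assms(3)
  by (subst measure_pmf.prob_eq_1) (auto simp: AE_measure_pmf_iff reaches_stage_def)

lemma indicator_unit_prefix_le_prob_reaches_stage:
  assumes "length \<Phi> = m" "s \<le> n" "n - s \<le> m"
  shows "(\<Prod>i<m. if i < n - s then (if \<Phi> ! i = ({Suc i}, {}) then 1 else 0)
                  else if fst (\<Phi> ! i) \<noteq> {} then 1 else 0)
    \<le> measure_pmf.prob (pur n \<Phi>) (Collect (reaches_stage s))"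
    (is "(\<Prod>i<m. ?g i) \<le> _")
proof (cases "\<forall>i<m. ?g i \<noteq> 0")
  case True
  have "fst c \<noteq> {}" if "c \<in> set \<Phi>" for c
  proof -
    obtain i where "i < m" "c = \<Phi> ! i"
      using \<open>c \<in> set \<Phi>\<close> assms(1) by (auto simp: in_set_conv_nth)
    then show ?thesis
      using True by (auto split: if_splits)
  qed
  moreover have "({i}, {}) \<in> set \<Phi>" if "i \<in> {1..n - s}" for i
  proof -
    have "i - 1 < n - s" "i - 1 < m"
      using that assms(3) by auto
    then have "\<Phi> ! (i - 1) = ({i}, {})"
      using True that by (auto split: if_splits)
    then show ?thesis
      using \<open>i - 1 < m\<close> assms(1) by (metis nth_mem)
  qed
  moreover have "(\<Prod>i<m. ?g i) \<le> 1"
    by (intro prod_le_1) auto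
  ultimately show ?thesis
    using prob_pur_reaches_stage_eq_1[OF _ _ assms(2)] by simp
next
  case False
  then obtain i where "i \<in> {..<m}" "?g i = 0"
    by blast
  then have "(\<Prod>i<m. ?g i) = 0"
    by (intro prod_zero) blast+
  then show ?thesis
    by (metis measure_nonneg)
qed

lemma list_avg_prob_reaches_stage_ge:
  assumes "1 \<le> n" "s \<le> n" "n - s \<le> m"
  shows "real (n * 2 ^ n) ^ (m - (n - s)) / card (horn_clauses n) ^ m
    \<le> list_avg (horn_clauses n) m (\<lambda>\<Phi>. measure_pmf.prob (pur n \<Phi>) (Collect (reaches_stage s)))"
proof -
  let ?H = "horn_clauses n"
  define k where "k = n - s"
  define g where "g i c = (if i < k then (if c = ({Suc i}, {}) then 1 else 0)
                           else if fst c \<noteq> {} then 1 else (0::real))" for i and c :: clause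
  have "(\<Sum>c\<in>?H. g i c) = (if i < k then 1 else n * 2 ^ n)" if "i < m" for i
  proof (cases "i < k")
    case True
    then have "({Suc i}, {}) \<in> ?H"
      unfolding horn_clauses_def k_def by auto
    then show ?thesis
      using True by (simp add: g_def finite_horn_clauses)
  next
    case False
    then show ?thesis
      using card_horn_clauses_positive[of n]
      by (simp add: g_def sum.If_cases finite_horn_clauses Int_def)
  qed
  then have "list_avg ?H m (\<lambda>\<Phi>. \<Prod>i<m. g i (\<Phi> ! i)) = (\<Prod>i<m. (if i < k then 1 else n * 2 ^ n) / card ?H)"
    by (simp add: list_avg_prod)
  also have "\<dots> = real (n * 2 ^ n) ^ (m - k) / card ?H ^ m"
  proof -
    have "{..<m} = {..<k} \<union> {k..<m}" "{..<k} \<inter> {k..<m} = {}"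
      using assms(3) by (auto simp: k_def)
    then show ?thesis
      by (simp add: prod.union_disjoint power_add[symmetric] power_divide k_def assms(3))
  qed
  finally have "list_avg ?H m (\<lambda>\<Phi>. \<Prod>i<m. g i (\<Phi> ! i)) = real (n * 2 ^ n) ^ (m - k) / card ?H ^ m" .
  moreover have "list_avg ?H m (\<lambda>\<Phi>. \<Prod>i<m. g i (\<Phi> ! i))
      \<le> list_avg ?H m (\<lambda>\<Phi>. measure_pmf.prob (pur n \<Phi>) (Collect (reaches_stage s)))"
    using indicator_unit_prefix_le_prob_reaches_stage[OF _ assms(2,3)]
    by (intro list_avg_mono) (simp add: g_def k_def)
  ultimately show ?thesis
    by (simp add: k_def)
qed

section \<open>The conditional rejection probability\<close>

lemma abs_ratio_minus_1_le:
  fixes a r b e f L :: real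
  assumes "0 \<le> a" "a \<le> 2 * b * (a + r) + 2 * e" "0 \<le> e" "e \<le> f" "0 < L" "L \<le> a + r"
  shows "\<bar>r / (a + r) - 1\<bar> \<le> 2 * b + 2 * f / L"
proof -
  have "2 * e / (a + r) \<le> 2 * e / L"
    using assms(3,5,6) by (intro divide_left_mono) auto
  also have "\<dots> \<le> 2 * f / L"
    using assms(4,5) by (intro divide_right_mono) auto
  finally have "2 * e / (a + r) \<le> 2 * f / L" .
  moreover have "\<bar>r / (a + r) - 1\<bar> = a / (a + r)"
    using assms(1,5,6) by (simp add: field_simps)
  moreover have "a / (a + r) \<le> (2 * b * (a + r) + 2 * e) / (a + r)"
    using assms(2,5,6) by (intro divide_right_mono) auto
  moreover have "\<dots> = 2 * b + 2 * e / (a + r)"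
    using assms(5,6) by (simp add: add_divide_distrib)
  ultimately show ?thesis by linarith
qed

lemma cond_prob_rejects_at_stage_eq:
  assumes "1 \<le> s" "s \<le> n"
  shows "cond_prob (measure_pmf (pur_run n m)) (rejects_at_stage s) (reaches_stage s)
    = list_avg (horn_clauses n) m
        (\<lambda>\<Phi>. \<Sum>is\<in>var_seqs n (n - s). path_weight \<Phi> {} is * reject_ratio \<Phi> (set is))
      / list_avg (horn_clauses n) m (\<lambda>\<Phi>. \<Sum>is\<in>var_seqs n (n - s). path_weight \<Phi> {} is)"
proof -
  have n: "1 \<le> n" using assms by simp
  have "{r. rejects_at_stage s r \<and> reaches_stage s r} = Collect (rejects_at_stage s)"
    by (auto simp: rejects_at_stage_def reaches_stage_def)
  moreover have "measure_pmf.prob (pur_run n m) (Collect (rejects_at_stage s))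
      = list_avg (horn_clauses n) m
          (\<lambda>\<Phi>. \<Sum>is\<in>var_seqs n (n - s). path_weight \<Phi> {} is * reject_ratio \<Phi> (set is))"
    unfolding pur_run_def measure_formula_pmf_bind[OF n]
    by (intro list_avg_cong prob_pur_rejects_at_stage) (use assms in auto)
  moreover have "measure_pmf.prob (pur_run n m) (Collect (reaches_stage s))
      = list_avg (horn_clauses n) m (\<lambda>\<Phi>. \<Sum>is\<in>var_seqs n (n - s). path_weight \<Phi> {} is)"
    unfolding pur_run_def measure_formula_pmf_bind[OF n]
    by (intro list_avg_cong prob_pur_reaches_stage) (use assms in auto)
  ultimately show ?thesis
    by (simp add: cond_prob_def)
qed

lemma cond_prob_rejects_at_stage_bound:
  assumes "1 \<le> s" "s < n" "n - s \<le> m"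
  defines "N \<equiv> real (card (horn_clauses n))"
  shows "\<bar>cond_prob (measure_pmf (pur_run n m)) (rejects_at_stage s) (reaches_stage s) - 1\<bar>
    \<le> 2 * (1 - 2 ^ (n - s - 1) / N) ^ M
      + 2 ^ (n + 1) * (N + (n + 1) * 2 ^ (n - 1)) ^ m / (2 ^ (m - M) * real (n * 2 ^ n) ^ (m - (n - s)))"
proof -
  let ?H = "horn_clauses n" and ?L = "var_seqs n (n - s)"
  define accept where
    "accept = list_avg ?H m (\<lambda>\<Phi>. \<Sum>is\<in>?L. path_weight \<Phi> {} is * (1 - reject_ratio \<Phi> (set is)))"
  define reject where
    "reject = list_avg ?H m (\<lambda>\<Phi>. \<Sum>is\<in>?L. path_weight \<Phi> {} is * reject_ratio \<Phi> (set is))"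
  define D where "D = real (n * 2 ^ n)"
  have n: "1 \<le> n" and N: "N > 0" and D: "D > 0"
    using assms card_horn_clauses_pos[of n] by (auto simp: N_def D_def)
  have split: "list_avg ?H m (\<lambda>\<Phi>. \<Sum>is\<in>?L. path_weight \<Phi> {} is) = accept + reject"
    unfolding accept_def reject_def list_avg_add[symmetric]
    by (simp add: sum.distrib[symmetric] algebra_simps)
  have "\<bar>cond_prob (measure_pmf (pur_run n m)) (rejects_at_stage s) (reaches_stage s) - 1\<bar>
      = \<bar>reject / (accept + reject) - 1\<bar>"
    using cond_prob_rejects_at_stage_eq[of s n m] assms by (simp add: split reject_def)
  also have "\<dots> \<le> 2 * (1 - 2 ^ (n - s - 1) / N) ^ M
      + 2 * (2 ^ n * ((N + (n + 1) * 2 ^ (n - 1)) / N) ^ m / 2 ^ (m - M)) / (D ^ (m - (n - s)) / N ^ m)"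
  proof (rule abs_ratio_minus_1_le)
    show "0 \<le> accept"
      unfolding accept_def using reject_ratio_le_1
      by (intro list_avg_nonneg sum_nonneg mult_nonneg_nonneg path_weight_nonneg) auto
    show "accept \<le> 2 * (1 - 2 ^ (n - s - 1) / N) ^ M * (accept + reject)
        + 2 * list_avg ?H m (\<lambda>\<Phi>. if few_outside n M \<Phi> then 1 else 0)"
      using list_avg_not_rejecting_le[OF assms(1,2), of m M]
      by (simp only: accept_def[symmetric] split N_def)
    show "0 \<le> list_avg ?H m (\<lambda>\<Phi>. if few_outside n M \<Phi> then 1 else 0)"
      by (intro list_avg_nonneg) auto
    show "list_avg ?H m (\<lambda>\<Phi>. if few_outside n M \<Phi> then 1 else 0)
        \<le> 2 ^ n * ((N + (n + 1) * 2 ^ (n - 1)) / N) ^ m / 2 ^ (m - M)"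
      unfolding N_def by (rule list_avg_few_outside_le)
    have "list_avg ?H m (\<lambda>\<Phi>. measure_pmf.prob (pur n \<Phi>) (Collect (reaches_stage s))) = accept + reject"
      unfolding split[symmetric] by (intro list_avg_cong prob_pur_reaches_stage) (use assms in auto)
    then show "D ^ (m - (n - s)) / N ^ m \<le> accept + reject"
      using list_avg_prob_reaches_stage_ge[OF n _ assms(3)] assms(2)
      by (simp add: D_def N_def)
  qed (use D N in simp)
  also have "2 * (2 ^ n * ((N + (n + 1) * 2 ^ (n - 1)) / N) ^ m / 2 ^ (m - M)) / (D ^ (m - (n - s)) / N ^ m)
      = 2 ^ (n + 1) * (N + (n + 1) * 2 ^ (n - 1)) ^ m / (2 ^ (m - M) * D ^ (m - (n - s)))"
    using N D by (simp add: field_simps power_divide)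
  finally show ?thesis
    by (simp add: D_def)
qed

lemma power_one_minus_le_exp:
  fixes x y :: real
  assumes "0 \<le> x" "x \<le> 1" "y \<le> x * M"
  shows "(1 - x) ^ M \<le> exp (- y)"
proof -
  have "(1 - x) ^ M \<le> exp (- x) ^ M"
    using exp_ge_add_one_self[of "- x"] assms(1,2) by (intro power_mono) auto
  also have "\<dots> = exp (- (x * M))"
    by (simp add: exp_of_nat_mult[symmetric] mult.commute)
  also have "\<dots> \<le> exp (- y)"
    using assms(3) by simp
  finally show ?thesis .
qed

lemma not_rejecting_term_le:
  fixes c :: real
  assumes "1 \<le> n" "p < n" "(c * 2 ^ n - 5) / 4 \<le> M"
  shows "(1 - 2 ^ (n - p - 1) / card (horn_clauses n)) ^ M
    \<le> exp (- (2 powr (real n - log 2 (real n) - real p) * (real n / (real n + 1) * (c - 5 / 2 ^ n) / 8)))"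
proof -
  define N where "N = real (card (horn_clauses n))"
  have N: "N \<le> (n + 1) * 2 ^ n" "0 < N"
    using card_horn_clauses_le[of n] card_horn_clauses_pos[OF assms(1)] unfolding N_def
    by (metis of_nat_le_iff of_nat_numeral of_nat_power of_nat_mult of_nat_Suc Suc_eq_plus1
        add.commute, simp)
  have x1: "2 ^ (n - p - 1) / N \<le> 1"
    using card_horn_clauses_ge[OF assms(1), of "n - p - 1"] N by (simp add: N_def)
  have x0: "0 \<le> 2 ^ (n - p - 1) / N"
    using N by auto
  have "2 powr (real n - log 2 (real n) - real p) * (real n / (real n + 1) * (c - 5 / 2 ^ n) / 8)
      = 2 ^ (n - p - 1) / ((n + 1) * 2 ^ n) * ((c * 2 ^ n - 5) / 4)"
  proof -
    have "2 powr (real n - log 2 (real n) - real p) = 2 powr (real (n - p - 1)) * 2 / n"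
      using assms by (simp add: powr_diff powr_add of_nat_diff)
    also have "\<dots> = 2 * 2 ^ (n - p - 1) / n"
      by (simp add: powr_realpow)
    finally have eq: "2 powr (real n - log 2 (real n) - real p) = 2 * 2 ^ (n - p - 1) / n" .
    show ?thesis
      unfolding eq using assms(1)
      by (simp add: divide_simps) (simp add: algebra_simps add_nonneg_eq_0_iff)
  qed
  also have "\<dots> \<le> 2 ^ (n - p - 1) / N * M"
  proof (cases "c * 2 ^ n - 5 \<le> 0")
    case True
    then show ?thesis
      using N by (intro order_trans[OF mult_nonneg_nonpos[of _ "(c * 2 ^ n - 5) / 4"]]) auto
  next
    case False
    then show ?thesis
      using N assms(3) by (intro mult_mono frac_le) auto
  qed
  finally have "2 powr (real n - log 2 (real n) - real p) * (real n / (real n + 1) * (c - 5 / 2 ^ n) / 8)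
      \<le> 2 ^ (n - p - 1) / N * M" .
  from power_one_minus_le_exp[OF x0 x1 this] show ?thesis
    by (simp add: N_def)
qed

lemma eight_fifths_power_div_le_exp:
  assumes "4 * M \<le> m"
  shows "(8 / 5 :: real) ^ m / 2 ^ (m - M) \<le> exp (- real M / 10)"
proof -
  have "(8 / 5 :: real) ^ m = (8 / 5) ^ M * (8 / 5) ^ (m - M)"
    using assms by (simp add: power_add[symmetric])
  moreover have "(8 / 5 :: real) ^ (m - M) / 2 ^ (m - M) = (4 / 5) ^ (m - M)"
    by (simp add: power_divide[symmetric])
  ultimately have "(8 / 5 :: real) ^ m / 2 ^ (m - M) = (8 / 5) ^ M * (4 / 5) ^ (m - M)"
    by (metis times_divide_eq_right)
  also have "\<dots> \<le> (8 / 5) ^ M * (4 / 5) ^ (3 * M)"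
    using assms by (intro mult_left_mono power_decreasing) auto
  also have "\<dots> = (8 / 5 * (4 / 5) ^ 3) ^ M"
    by (simp only: power_mult power_mult_distrib)
  also have "\<dots> = (512 / 625) ^ M"
    by (simp add: eval_nat_numeral)
  also have "\<dots> \<le> exp (- 1 / 10) ^ M"
    using exp_ge_add_one_self[of "- 1 / 10 :: real"] by (intro power_mono) auto
  also have "\<dots> = exp (- real M / 10)"
    by (simp add: exp_of_nat_mult[symmetric])
  finally show ?thesis .
qed

lemma card_horn_clauses_plus_le:
  assumes "15 \<le> n"
  shows "card (horn_clauses n) + (n + 1) * 2 ^ (n - 1) \<le> 8 / 5 * (real n * 2 ^ n)"
proof -
  define a where "a = (2::real) ^ (n - 1)"
  have two: "(2::real) ^ n = 2 * a"
    using assms by (simp add: a_def power_Suc[symmetric])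
  have "real (card (horn_clauses n)) \<le> (n + 1) * 2 ^ n"
    using card_horn_clauses_le[of n]
    by (metis of_nat_le_iff of_nat_numeral of_nat_power of_nat_mult of_nat_Suc Suc_eq_plus1 add.commute)
  then have "real (card (horn_clauses n)) \<le> 2 * a + 2 * (real n * a)"
    by (simp add: two algebra_simps)
  moreover have "15 * a \<le> real n * a"
    using assms by (intro mult_right_mono) (auto simp: a_def)
  moreover have "real ((n + 1) * 2 ^ (n - 1)) = (real n + 1) * a"
    unfolding a_def by (simp add: algebra_simps)
  ultimately show ?thesis
    unfolding two by (simp add: algebra_simps)
qed

lemma few_outside_term_le:
  fixes c :: real
  assumes "15 \<le> n" "k \<le> n" "k \<le> m" "4 * M \<le> m" "(c * 2 ^ n - 5) / 4 \<le> M"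
  defines "N \<equiv> real (card (horn_clauses n))"
  shows "2 ^ (n + 1) * (N + (n + 1) * 2 ^ (n - 1)) ^ m / (2 ^ (m - M) * real (n * 2 ^ n) ^ (m - k))
    \<le> 2 ^ (n + 1) * (real n * 2 ^ n) ^ n * exp (- (c * 2 ^ n - 5) / 40)"
proof -
  define D where "D = real n * 2 ^ n"
  define T where "T = N + (n + 1) * 2 ^ (n - 1)"
  have "1 * 1 \<le> real n * 2 ^ n"
    using assms(1) by (intro mult_mono) auto
  then have D: "1 \<le> D"
    by (simp add: D_def)
  have T: "T \<le> 8 / 5 * D" "0 \<le> T"
    using card_horn_clauses_plus_le[OF assms(1)] by (simp_all add: T_def D_def N_def)
  have "T ^ m / (2 ^ (m - M) * D ^ (m - k)) \<le> (8 / 5 * D) ^ m / (2 ^ (m - M) * D ^ (m - k))"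
    using T D by (intro divide_right_mono power_mono) auto
  also have "\<dots> = (8 / 5) ^ m / 2 ^ (m - M) * D ^ k"
    using D assms(3) by (simp add: power_mult_distrib power_add[symmetric] field_simps)
  also have "\<dots> \<le> exp (- (c * 2 ^ n - 5) / 40) * D ^ n"
  proof (intro mult_mono)
    have "exp (- real M / 10) \<le> exp (- (c * 2 ^ n - 5) / 40)"
      using assms(5) by simp
    then show "(8 / 5 :: real) ^ m / 2 ^ (m - M) \<le> exp (- (c * 2 ^ n - 5) / 40)"
      using eight_fifths_power_div_le_exp[OF assms(4)] by linarith
    show "D ^ k \<le> D ^ n"
      using D assms(2) by (intro power_increasing) auto
  qed (use D in auto)
  finally have "2 ^ (n + 1) * (T ^ m / (2 ^ (m - M) * D ^ (m - k)))
      \<le> 2 ^ (n + 1) * (exp (- (c * 2 ^ n - 5) / 40) * D ^ n)"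
    by (rule mult_left_mono) simp
  then show ?thesis
    by (simp add: T_def D_def mult_ac)
qed

definition rejection_bound :: "real \<Rightarrow> real \<Rightarrow> nat \<Rightarrow> real" where
  "rejection_bound c d n =
     2 * exp (- (2 powr d * (real n / (real n + 1) * (c - 5 / 2 ^ n) / 8)))
     + 2 ^ (n + 1) * (real n * 2 ^ n) ^ n * exp (- (c * 2 ^ n - 5) / 40)"

lemma cond_prob_rejects_at_stage_le:
  fixes c :: real
  assumes "15 \<le> n" "1 \<le> p" "p < n" "real n \<le> c * 2 ^ n - 1"
  shows "\<bar>cond_prob (measure_pmf (pur_run n (nat \<lfloor>c * 2 ^ n\<rfloor>))) (rejects_at_stage p) (reaches_stage p)
      - 1\<bar> \<le> rejection_bound c (real n - log 2 (real n) - real p) n"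
proof -
  define m where "m = nat \<lfloor>c * 2 ^ n\<rfloor>"
  define M where "M = m div 4"
  have "c * 2 ^ n - 1 \<le> m"
    using assms(1,4) unfolding m_def by linarith
  moreover have "m \<le> 4 * M + 3"
    unfolding M_def by presburger
  then have "real m \<le> real (4 * M + 3)"
    by (rule of_nat_mono)
  ultimately have "real n \<le> real m" "c * 2 ^ n - 5 \<le> 4 * real M"
    using assms(4) by linarith+
  then have "n - p \<le> m" "(c * 2 ^ n - 5) / 4 \<le> M"
    by simp_all
  have "4 * M \<le> m"
    unfolding M_def by simp
  have "\<bar>cond_prob (measure_pmf (pur_run n m)) (rejects_at_stage p) (reaches_stage p) - 1\<bar>
      \<le> rejection_bound c (real n - log 2 (real n) - real p) n"
    using cond_prob_rejects_at_stage_bound[OF assms(2,3) \<open>n - p \<le> m\<close>, of M]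
      not_rejecting_term_le[of n p c M] few_outside_term_le[OF assms(1) _ _ \<open>4 * M \<le> m\<close>, of "n - p" c]
      assms(1,3) \<open>n - p \<le> m\<close> \<open>(c * 2 ^ n - 5) / 4 \<le> M\<close>
    unfolding rejection_bound_def by simp
  then show ?thesis
    by (simp only: m_def)
qed

lemma rejection_bound_tendsto_0:
  fixes c :: real and d :: "nat \<Rightarrow> real"
  assumes "c > 0" "filterlim d at_top sequentially"
  shows "(\<lambda>n. rejection_bound c (d n) n) \<longlonglongrightarrow> 0"
proof -
  have g: "(\<lambda>n. real n / (real n + 1) * (c - 5 / 2 ^ n) / 8) \<longlonglongrightarrow> c / 8"
    by real_asymp
  have "filterlim (\<lambda>n. 2 powr d n) at_top sequentially"
    by (rule filterlim_compose[OF _ assms(2)]) real_asymp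
  then have "filterlim (\<lambda>n. 2 powr d n * (real n / (real n + 1) * (c - 5 / 2 ^ n) / 8))
      at_top sequentially"
    using assms(1) by (intro filterlim_at_top_mult_tendsto_pos[OF g]) simp_all
  then have "(\<lambda>n. exp (- (2 powr d n * (real n / (real n + 1) * (c - 5 / 2 ^ n) / 8)))) \<longlonglongrightarrow> 0"
    by (intro filterlim_compose[OF exp_at_bot]) (simp add: filterlim_uminus_at_top)
  moreover have "(\<lambda>n. 2 ^ (n + 1) * (real n * 2 ^ n) ^ n * exp (- (c * 2 ^ n - 5) / 40)) \<longlonglongrightarrow> 0"
    using assms(1) by real_asymp
  ultimately show ?thesis
    unfolding rejection_bound_def using tendsto_add[OF tendsto_mult_right_zero] by fastforce
qed

theorem mainTheorem5:
  fixes c :: real and p :: "nat \<Rightarrow> nat"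
  assumes "c > 0"
    and "\<And>n. n \<ge> 1 \<Longrightarrow> 1 \<le> p n \<and> p n \<le> n"
    and "filterlim (\<lambda>n. real n - log 2 (real n) - real (p n)) at_top sequentially"
  shows "(\<lambda>n. cond_prob (measure_pmf (pur_run n (nat \<lfloor>c * 2 ^ n\<rfloor>)))
              (rejects_at_stage (p n)) (reaches_stage (p n))) \<longlonglongrightarrow> 1"
proof -
  let ?C = "\<lambda>n. cond_prob (measure_pmf (pur_run n (nat \<lfloor>c * 2 ^ n\<rfloor>)))
    (rejects_at_stage (p n)) (reaches_stage (p n))"
  have "eventually (\<lambda>n. real n - log 2 (real n) - real (p n) \<ge> 1) sequentially"
    using assms(3) by (simp add: filterlim_at_top)
  moreover have "eventually (\<lambda>n. real n \<le> c * 2 ^ n - 1) sequentially"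
    using assms(1) by real_asymp
  ultimately have "eventually (\<lambda>n. \<bar>?C n - 1\<bar>
      \<le> rejection_bound c (real n - log 2 (real n) - real (p n)) n) sequentially"
    using eventually_ge_at_top[of 15]
  proof eventually_elim
    case (elim n)
    have "log 2 (real n) \<ge> 0"
      using elim by simp
    then have "real (p n) < real n"
      using elim by linarith
    then have "p n < n" "1 \<le> p n"
      using assms(2)[of n] by auto
    then show ?case
      using elim by (intro cond_prob_rejects_at_stage_le) auto
  qed
  then have "(\<lambda>n. ?C n - 1) \<longlonglongrightarrow> 0"
    by (intro Lim_null_comparison[OF _ rejection_bound_tendsto_0[OF assms(1,3)]]) simp
  then show ?thesis
    by (rule LIM_zero_cancel)
qed

end
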